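(* Let $Y$ be a compact set in $\mathbb{C}^N$, let $x_0\in Y$, let $\varepsilon>0$, and let $\{p_j\}$ be a countable collection of polynomials on $\mathbb{C}^N$ with $p_j(x_0)\neq 0$ for all $j$. Then there exists a totally disconnected, compact, polynomially convex set $E$ with $x_0\in E\subset Y$ such that (i) each $p_j$ has no zeros on $E$, and (ii) $m(Y\setminus E)<\varepsilon$.
   Context: $m$ denotes $2N$-dimensional Lebesgue measure on $\mathbb{C}^N$. For compact $X\subset\mathbb{C}^N$, $\widehat X=\{z\in\mathbb{C}^N: |p(z)|\le \max_X|p| \text{ for all polynomials } p\}$, and $X$ is polynomially convex if $\widehat X=X$. *)

theory Defs
  imports "HOL-Analysis.Analysis"
begin

inductive cpoly :: "(complex ^ 'n \<Rightarrow> complex) \<Rightarrow> bool" where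
  cpoly_const: "cpoly (\<lambda>z. c)"
| cpoly_coord: "cpoly (\<lambda>z. z $ i)"
| cpoly_add: "cpoly p \<Longrightarrow> cpoly q \<Longrightarrow> cpoly (\<lambda>z. p z + q z)"
| cpoly_mult: "cpoly p \<Longrightarrow> cpoly q \<Longrightarrow> cpoly (\<lambda>z. p z * q z)"

definition poly_hull :: "(complex ^ 'n) set \<Rightarrow> (complex ^ 'n) set" where
  "poly_hull X = {z. \<forall>p. cpoly p \<longrightarrow> norm (p z) \<le> (SUP x\<in>X. norm (p x))}"

definition polynomially_convex :: "(complex ^ 'n) set \<Rightarrow> bool" where
  "polynomially_convex X \<longleftrightarrow> poly_hull X = X"

definition totally_disconnected :: "'a::topological_space set \<Rightarrow> bool" where
  "totally_disconnected S \<longleftrightarrow> (\<forall>x\<in>S. connected_component_set S x = {x})"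

end

theory Submission
  imports Defs "HOL-Computational_Algebra.Fundamental_Theorem_Algebra"
begin

text \<open>The set \<open>E\<close> is \<open>Y\<close> minus two open sets of small measure that avoid \<open>x\<^sub>0\<close>. The first, \<open>W\<close>,
  covers the zero sets of the \<open>p\<^sub>j\<close>; it exists because these zero sets are Lebesgue null (Fubini
  along coordinate lines, on which a polynomial has finitely many zeros unless it vanishes).
  The second, \<open>B\<close>, consists of the points one of whose real coordinates lies in a dense open
  subset of \<open>\<real>\<close> of small length. Every real coordinate projection of \<open>E\<close> then has empty interior.
  This forces \<open>E\<close> to be totally disconnected, and also polynomially convex: a point \<open>z \<notin> E\<close>
  is separated from \<open>E\<close> by a product, over the coordinates, of one-variable polynomials that
  peak on small rectangles around \<open>z\<^sub>k\<close> whose sides miss the projections of \<open>E\<close>. These are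
  obtained by Runge-type approximation (pole pushing) of the rational functions
  \<open>(1 + w)\<^sup>n / ((1 + w)\<^sup>n + (w - 1)\<^sup>n)\<close>, which tend to the indicator of a half plane.\<close>

section \<open>Polynomial functions on \<open>\<complex>\<^sup>N\<close>\<close>

lemma cpoly_continuous: "cpoly p \<Longrightarrow> continuous_on UNIV p"
  by (induction rule: cpoly.induct) (auto intro!: continuous_intros)

lemma cpoly_on_line: "cpoly p \<Longrightarrow> \<exists>q. \<forall>t. p (a + t *s b) = poly q t"
proof (induction rule: cpoly.induct)
  case (cpoly_const c)
  show ?case by (rule exI[of _ "[:c:]"]) simp
next
  case (cpoly_coord i)
  show ?case by (rule exI[of _ "[:a$i, b$i:]"]) (simp add: algebra_simps)
next
  case (cpoly_add p q)
  then obtain q1 q2 where "\<forall>t. p (a + t *s b) = poly q1 t" "\<forall>t. q (a + t *s b) = poly q2 t"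
    by blast
  then show ?case by (intro exI[of _ "q1 + q2"]) simp
next
  case (cpoly_mult p q)
  then obtain q1 q2 where "\<forall>t. p (a + t *s b) = poly q1 t" "\<forall>t. q (a + t *s b) = poly q2 t"
    by blast
  then show ?case by (intro exI[of _ "q1 * q2"]) simp
qed

lemma cpoly_poly_component: "cpoly (\<lambda>z::complex^'n. poly q (z $ k))"
proof (induction q)
  case 0
  show ?case using cpoly_const[of 0] by simp
next
  case (pCons a p)
  have "cpoly (\<lambda>z::complex^'n. a + z $ k * poly p (z $ k))"
    by (intro cpoly_add cpoly_mult cpoly_const cpoly_coord pCons)
  then show ?case by simp
qed

lemma cpoly_prod: "finite I \<Longrightarrow> (\<And>i. i \<in> I \<Longrightarrow> cpoly (f i)) \<Longrightarrow> cpoly (\<lambda>z. \<Prod>i\<in>I. f i z)"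
  by (induction I rule: finite_induct) (auto intro: cpoly_const cpoly_mult)

section \<open>Null zero sets of polynomials\<close>

text \<open>Slicing the sweep of \<open>S\<close> along \<open>e\<close> at fixed parameters \<open>t\<close> gives translates of \<open>S\<close>, so it has
  the measure of \<open>S\<close>; slicing it at fixed \<open>y\<close> gives the intersection of \<open>S\<close> with the line \<open>y + t e\<close>.\<close>

definition sweep :: "(complex^'n) set \<Rightarrow> complex^'n \<Rightarrow> ((complex^'n) \<times> complex) set" where
  "sweep S e = {z. snd z \<in> cbox 0 (1 + \<i>) \<and> fst z + snd z *s e \<in> S}"

lemma sets_sweep:
  fixes S :: "(complex^'n) set"
  assumes "closed S" shows "sweep S e \<in> sets (lborel \<Otimes>\<^sub>M lborel)"
proof -
  have "continuous_on UNIV (\<lambda>z::(complex^'n) \<times> complex. fst z + snd z *s e)"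
    unfolding vector_scalar_mult_def by (intro continuous_intros continuous_on_vec_lambda)
  then have "closed ((\<lambda>z::(complex^'n) \<times> complex. fst z + snd z *s e) -` S)"
    using assms closed_vimage by blast
  moreover have "closed (snd -` cbox 0 (1 + \<i>) :: ((complex^'n) \<times> complex) set)"
    by (intro continuous_closed_vimage) (auto intro: continuous_intros)
  moreover have "sweep S e = snd -` cbox 0 (1 + \<i>) \<inter> (\<lambda>z. fst z + snd z *s e) -` S"
    by (auto simp: sweep_def)
  ultimately show ?thesis unfolding lborel_prod by simp
qed

lemma emeasure_sweep:
  fixes S :: "(complex^'n) set"
  assumes "closed S" shows "emeasure (lborel \<Otimes>\<^sub>M lborel) (sweep S e) = emeasure lborel S"
proof -
  let ?D = "cbox (0::complex) (1 + \<i>)"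
  have "emeasure (lborel \<Otimes>\<^sub>M lborel) (sweep S e)
      = (\<integral>\<^sup>+t. emeasure lborel ((\<lambda>y. (y, t)) -` sweep S e) \<partial>lborel)"
    by (rule lborel_pair.emeasure_pair_measure_alt2[OF sets_sweep[OF assms]])
  also have "\<dots> = (\<integral>\<^sup>+t. emeasure lborel S * indicator ?D t \<partial>lborel)"
  proof (rule nn_integral_cong)
    fix t :: complex
    have "emeasure (distr lborel borel ((+) (t *s e))) S = emeasure lborel S"
      by (simp add: lborel_distr_plus)
    then have "emeasure lborel ((\<lambda>y. t *s e + y) -` S) = emeasure lborel S"
      using assms by (subst (asm) emeasure_distr) auto
    moreover have "(\<lambda>y. (y, t)) -` sweep S e = (if t \<in> ?D then (\<lambda>y. t *s e + y) -` S else {})"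
      by (auto simp: sweep_def add.commute)
    ultimately show "emeasure lborel ((\<lambda>y. (y, t)) -` sweep S e) = emeasure lborel S * indicator ?D t"
      by simp
  qed
  also have "\<dots> = emeasure lborel S * emeasure lborel ?D"
    by (simp add: nn_integral_cmult_indicator)
  also have "emeasure lborel ?D = 1"
    by (simp add: emeasure_lborel_cbox_eq Basis_complex_def inner_complex_def)
  finally show ?thesis by simp
qed

lemma null_sets_if_almost_all_lines_countable:
  fixes S :: "(complex^'n) set" and e :: "complex^'n"
  assumes S: "closed S" and lines: "AE y in lborel. countable {t. y + t *s e \<in> S}"
  shows "S \<in> null_sets lborel"
proof -
  have "emeasure lborel S = (\<integral>\<^sup>+y. emeasure lborel (Pair y -` sweep S e) \<partial>lborel)"
    using lborel.emeasure_pair_measure_alt[OF sets_sweep[OF S]] by (simp add: emeasure_sweep[OF S])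
  also have "\<dots> = (\<integral>\<^sup>+y. 0 \<partial>(lborel :: (complex^'n) measure))"
  proof (rule nn_integral_cong_AE)
    show "AE y in lborel. emeasure lborel (Pair y -` sweep S e) = 0"
      using lines
    proof eventually_elim
      case (elim y)
      moreover have "Pair y -` sweep S e \<subseteq> {t. y + t *s e \<in> S}" by (auto simp: sweep_def)
      ultimately show ?case by (simp add: emeasure_lborel_countable countable_subset)
    qed
  qed
  finally show ?thesis using S by (simp add: null_sets_def)
qed

text \<open>Removing the coordinates one at
  a time leads from the empty set \<open>vanishing_set p UNIV\<close> to the zero set \<open>vanishing_set p {}\<close>.\<close>

definition vanishing_set :: "(complex^'n \<Rightarrow> complex) \<Rightarrow> 'n set \<Rightarrow> (complex^'n) set" where
  "vanishing_set p K = {y. \<forall>u. (\<forall>i. i \<notin> K \<longrightarrow> u$i = 0) \<longrightarrow> p (y + u) = 0}"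

lemma vanishing_set_empty:
  fixes p :: "complex^'n \<Rightarrow> complex"
  shows "vanishing_set p {} = {z. p z = 0}"
proof (intro set_eqI iffI CollectI)
  fix z assume "z \<in> vanishing_set p {}"
  then have "p (z + 0) = 0" unfolding vanishing_set_def by (simp del: add_0_right)
  then show "p z = 0" by simp
next
  fix z assume "z \<in> {z. p z = 0}"
  then have "p z = 0" by simp
  show "z \<in> vanishing_set p {}" unfolding vanishing_set_def
  proof (intro CollectI allI impI)
    fix u :: "complex^'n" assume "\<forall>i. i \<notin> {} \<longrightarrow> u $ i = 0"
    then have "u = 0" by (simp add: vec_eq_iff)
    then show "p (z + u) = 0" using \<open>p z = 0\<close> by simp
  qed
qed

lemma vanishing_set_UNIV:
  assumes "p x0 \<noteq> 0" shows "vanishing_set p UNIV = {}"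
proof -
  have "p (y + (x0 - y)) \<noteq> 0" for y using assms by simp
  then show ?thesis unfolding vanishing_set_def by blast
qed

lemma closed_vanishing_set:
  assumes "cpoly p" shows "closed (vanishing_set p K)"
proof -
  have "closed {y. p (y + u) = 0}" for u
  proof -
    have "continuous_on UNIV (p \<circ> (\<lambda>y. y + u))"
        by (rule continuous_on_compose)
         (auto intro: continuous_intros cpoly_continuous[OF assms] continuous_on_subset)
    then show ?thesis by (intro closed_Collect_eq) (auto simp: o_def)
  qed
  moreover have "vanishing_set p K = (\<Inter>u\<in>{u. \<forall>i. i \<notin> K \<longrightarrow> u$i = 0}. {y. p (y + u) = 0})"
    by (auto simp: vanishing_set_def)
  ultimately show ?thesis by auto
qed

lemma finite_line_inter_vanishing_set:
  assumes "cpoly p" "y \<notin> vanishing_set p (insert i K)"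
  shows "finite {t. y + t *s axis i 1 \<in> vanishing_set p K}"
proof -
  from assms(2) obtain u where u: "\<forall>j. j \<notin> insert i K \<longrightarrow> u$j = 0" "p (y + u) \<noteq> 0"
    by (auto simp: vanishing_set_def)
  define u' where "u' = u - (u$i) *s axis i 1"
  have u': "\<forall>j. j \<notin> K \<longrightarrow> u'$j = 0"
    using u(1) by (auto simp: u'_def axis_def)
  obtain q where q: "\<forall>t. p ((y + u') + t *s axis i 1) = poly q t"
    using cpoly_on_line[OF assms(1)] by blast
  have "y + u' + u$i *s axis i 1 = y + u" by (simp add: u'_def)
  with q u(2) have "q \<noteq> 0" by (metis poly_0)
  have "{t. y + t *s axis i 1 \<in> vanishing_set p K} \<subseteq> {t. poly q t = 0}"
  proof
    fix t assume "t \<in> {t. y + t *s axis i 1 \<in> vanishing_set p K}"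
    then have "p (y + t *s axis i 1 + u') = 0" using u' by (auto simp: vanishing_set_def)
    then show "t \<in> {t. poly q t = 0}" using q by (simp add: algebra_simps)
  qed
  then show ?thesis using poly_roots_finite[OF \<open>q \<noteq> 0\<close>] finite_subset by blast
qed

lemma cpoly_zero_set_null:
  assumes p: "cpoly p" and x0: "p x0 \<noteq> 0"
  shows "{z. p z = 0} \<in> null_sets lborel"
proof -
  have "vanishing_set p (UNIV - J) \<in> null_sets lborel" if "finite J" for J
    using that
  proof (induction J rule: finite_induct)
    case empty
    show ?case using vanishing_set_UNIV[of p x0] x0 by simp
  next
    case (insert i J)
    have "AE y in lborel. countable {t. y + t *s axis i 1 \<in> vanishing_set p (UNIV - insert i J)}"
    proof (rule AE_I'[OF insert.IH], safe)
      fix y assume "\<not> countable {t. y + t *s axis i 1 \<in> vanishing_set p (UNIV - insert i J)}"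
      moreover have "insert i (UNIV - insert i J) = UNIV - J" using insert.hyps by auto
      ultimately show "y \<in> vanishing_set p (UNIV - J)"
        using finite_line_inter_vanishing_set[OF p, of y i "UNIV - insert i J"]
        by (auto intro: countable_finite)
    qed
    then show ?case
      by (intro null_sets_if_almost_all_lines_countable closed_vanishing_set p)
  qed
  from this[of UNIV] show ?thesis by (simp add: vanishing_set_empty)
qed

section \<open>Uniform polynomial approximation in one complex variable\<close>

definition poly_approximable :: "complex set \<Rightarrow> (complex \<Rightarrow> complex) \<Rightarrow> bool" where
  "poly_approximable K f \<longleftrightarrow> (\<forall>\<delta>>0. \<exists>q. \<forall>w\<in>K. norm (f w - poly q w) < \<delta>)"

lemma poly_approximable_poly: "poly_approximable K (poly q)"
  unfolding poly_approximable_def by (auto intro!: exI[of _ q])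

lemma poly_approximable_const: "poly_approximable K (\<lambda>w. c)"
proof -
  have "poly [:c:] = (\<lambda>w. c)" by (simp add: fun_eq_iff)
  then show ?thesis using poly_approximable_poly[of K "[:c:]"] by simp
qed

lemma poly_approximable_ident: "poly_approximable K (\<lambda>w. w)"
proof -
  have "poly [:0, 1:] = (\<lambda>w::complex. w)" by (simp add: fun_eq_iff)
  then show ?thesis using poly_approximable_poly[of K "[:0, 1:]"] by simp
qed

lemma poly_approximable_uniform_limit:
  assumes "\<And>\<delta>. \<delta> > 0 \<Longrightarrow> \<exists>h. poly_approximable K h \<and> (\<forall>w\<in>K. norm (f w - h w) \<le> \<delta>)"
  shows "poly_approximable K f"
  unfolding poly_approximable_def
proof (intro allI impI)
  fix \<delta> :: real assume "\<delta> > 0"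
  then obtain h where h: "poly_approximable K h" "\<forall>w\<in>K. norm (f w - h w) \<le> \<delta>/2"
    using assms[of "\<delta>/2"] by auto
  then obtain q where q: "\<forall>w\<in>K. norm (h w - poly q w) < \<delta>/2"
    using \<open>\<delta> > 0\<close> unfolding poly_approximable_def by (meson half_gt_zero)
  have "norm (f w - poly q w) < \<delta>" if "w \<in> K" for w
  proof -
    have "norm (f w - poly q w) \<le> norm (f w - h w) + norm (h w - poly q w)"
      by (rule norm_diff_triangle_le) auto
    also have "\<dots> < \<delta>" using h q that by fastforce
    finally show ?thesis .
  qed
  then show "\<exists>q. \<forall>w\<in>K. norm (f w - poly q w) < \<delta>" by blast
qed

lemma poly_approximable_add:
  assumes "poly_approximable K f" "poly_approximable K g"
  shows "poly_approximable K (\<lambda>w. f w + g w)"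
proof (rule poly_approximable_uniform_limit)
  fix \<delta> :: real assume "\<delta> > 0"
  then obtain p q where p: "\<forall>w\<in>K. norm (f w - poly p w) < \<delta>/2"
    and q: "\<forall>w\<in>K. norm (g w - poly q w) < \<delta>/2"
    using assms unfolding poly_approximable_def by (meson half_gt_zero)
  have "norm (f w + g w - poly (p + q) w) \<le> \<delta>" if "w \<in> K" for w
  proof -
    have "norm (f w + g w - poly (p + q) w) \<le> norm (f w - poly p w) + norm (g w - poly q w)"
      using norm_triangle_ineq[of "f w - poly p w" "g w - poly q w"] by (simp add: algebra_simps)
    also have "\<dots> \<le> \<delta>" using p q that by fastforce
    finally show ?thesis .
  qed
  then show "\<exists>h. poly_approximable K h \<and> (\<forall>w\<in>K. norm (f w + g w - h w) \<le> \<delta>)"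
    using poly_approximable_poly by blast
qed

lemma bounded_if_poly_approximable:
  assumes "poly_approximable K f" "compact K"
  obtains B where "\<forall>w\<in>K. norm (f w) \<le> B"
proof -
  obtain q where q: "\<forall>w\<in>K. norm (f w - poly q w) < 1"
    using assms(1) unfolding poly_approximable_def by force
  have "compact (poly q ` K)"
    by (rule compact_continuous_image) (auto intro: continuous_intros assms)
  then obtain B where B: "\<forall>x\<in>poly q ` K. norm x \<le> B"
    using compact_imp_bounded bounded_iff by metis
  have "norm (f w) \<le> B + 1" if "w \<in> K" for w
  proof -
    have "norm (f w) \<le> norm (poly q w) + norm (f w - poly q w)" by (rule norm_triangle_sub)
    also have "\<dots> \<le> B + 1" using q B that by (intro add_mono) force+
    finally show ?thesis .
  qed
  then show thesis using that by blast
qed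

lemma poly_approximable_mult:
  assumes f: "poly_approximable K f" and g: "poly_approximable K g" and K: "compact K"
  shows "poly_approximable K (\<lambda>w. f w * g w)"
proof (rule poly_approximable_uniform_limit)
  fix \<delta> :: real assume "\<delta> > 0"
  obtain Bf where Bf: "\<forall>w\<in>K. norm (f w) \<le> Bf" using bounded_if_poly_approximable[OF f K] .
  obtain Bg where Bg: "\<forall>w\<in>K. norm (g w) \<le> Bg" using bounded_if_poly_approximable[OF g K] .
  define C where "C = \<bar>Bf\<bar> + \<bar>Bg\<bar> + 1"
  have C: "C > 0" by (simp add: C_def add_nonneg_pos)
  define \<eta> where "\<eta> = min 1 (\<delta> / C)"
  have \<eta>: "\<eta> > 0" "\<eta> \<le> 1" "\<eta> * C \<le> \<delta>"
    using \<open>\<delta> > 0\<close> C mult_right_mono[of \<eta> "\<delta> / C" C] by (auto simp: \<eta>_def)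
  obtain p where p: "\<forall>w\<in>K. norm (f w - poly p w) < \<eta>"
    using f \<eta> unfolding poly_approximable_def by blast
  obtain q where q: "\<forall>w\<in>K. norm (g w - poly q w) < \<eta>"
    using g \<eta> unfolding poly_approximable_def by blast
  have "norm (f w * g w - poly (p * q) w) \<le> \<delta>" if w: "w \<in> K" for w
  proof -
    have nf: "norm (f w) \<le> \<bar>Bf\<bar>" and ng: "norm (g w) \<le> \<bar>Bg\<bar>" using Bf Bg w by force+
    have dp: "norm (f w - poly p w) \<le> \<eta>" and dq: "norm (g w - poly q w) \<le> \<eta>"
      using p q w by (auto intro: less_imp_le)
    have nq: "norm (poly q w) \<le> \<bar>Bg\<bar> + 1"
      using norm_triangle_sub[of "poly q w" "g w"] ng dq \<eta>(2) by (simp add: norm_minus_commute)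
    have "f w * g w - poly (p * q) w = f w * (g w - poly q w) + (f w - poly p w) * poly q w"
      by (simp add: algebra_simps)
    then have "norm (f w * g w - poly (p * q) w)
        \<le> norm (f w) * norm (g w - poly q w) + norm (f w - poly p w) * norm (poly q w)"
      by (metis norm_mult norm_triangle_ineq)
    also have "\<dots> \<le> \<bar>Bf\<bar> * \<eta> + \<eta> * (\<bar>Bg\<bar> + 1)"
      using nf dq dp nq \<eta> by (intro add_mono mult_mono) auto
    also have "\<dots> = \<eta> * C" by (simp add: C_def algebra_simps)
    finally show ?thesis using \<eta>(3) by linarith
  qed
  then show "\<exists>h. poly_approximable K h \<and> (\<forall>w\<in>K. norm (f w * g w - h w) \<le> \<delta>)"
    using poly_approximable_poly by blast
qed

lemma poly_approximable_cmult:
  "poly_approximable K f \<Longrightarrow> compact K \<Longrightarrow> poly_approximable K (\<lambda>w. c * f w)"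
  by (rule poly_approximable_mult[OF poly_approximable_const])

lemma poly_approximable_power:
  "poly_approximable K f \<Longrightarrow> compact K \<Longrightarrow> poly_approximable K (\<lambda>w. f w ^ n)"
  by (induction n) (auto intro: poly_approximable_const poly_approximable_mult)

lemma poly_approximable_sum:
  "finite I \<Longrightarrow> (\<And>i. i \<in> I \<Longrightarrow> poly_approximable K (f i))
    \<Longrightarrow> poly_approximable K (\<lambda>w. \<Sum>i\<in>I. f i w)"
  by (induction I rule: finite_induct) (auto intro: poly_approximable_const poly_approximable_add)

lemma poly_approximable_prod:
  "finite I \<Longrightarrow> (\<And>i. i \<in> I \<Longrightarrow> poly_approximable K (f i)) \<Longrightarrow> compact K
    \<Longrightarrow> poly_approximable K (\<lambda>w. \<Prod>i\<in>I. f i w)"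
  by (induction I rule: finite_induct) (auto intro: poly_approximable_const poly_approximable_mult)

section \<open>Pole pushing\<close>

lemma poly_approximable_inverse_far:
  assumes K: "compact K" and B: "\<forall>w\<in>K. norm w \<le> B" "B > 0" and b: "norm b \<ge> 2 * B"
  shows "poly_approximable K (\<lambda>w. 1 / (w - b))"
proof (rule poly_approximable_uniform_limit)
  fix \<delta> :: real assume "\<delta> > 0"
  obtain M where M: "(1/2::real) ^ M < \<delta> * B"
    using real_arch_pow_inv[of "\<delta> * B" "1/2"] \<open>\<delta> > 0\<close> B by auto
  have b0: "b \<noteq> 0" using b B by auto
  \<comment> \<open>a partial sum of \<open>1 / (w - b) = - (1 / b) * (\<Sum>k. (w / b) ^ k)\<close>\<close>
  define h where "h = (\<lambda>w. - inverse b * (\<Sum>k<M. (inverse b * w) ^ k))"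
  have "poly_approximable K h" unfolding h_def
    by (intro poly_approximable_cmult poly_approximable_sum poly_approximable_power
        poly_approximable_ident K) auto
  moreover have "norm (1 / (w - b) - h w) \<le> \<delta>" if w: "w \<in> K" for w
  proof -
    define x where "x = inverse b * w"
    have "norm x = norm w / norm b" by (simp add: x_def norm_mult norm_inverse divide_inverse)
    also have "\<dots> \<le> B / (2 * B)" using B w b by (intro frac_le) auto
    finally have nx: "norm x \<le> 1/2" using B by simp
    then have x1: "x \<noteq> 1" by auto
    have n1x: "norm (1 - x) \<ge> 1/2"
      using norm_triangle_ineq[of "1 - x" x] nx by simp
    have "h w = - inverse b * ((1 - x ^ M) / (1 - x))"
      by (simp add: h_def x_def[symmetric] sum_gp_strict x1)
    moreover have "w - b = - b * (1 - x)" using b0 by (simp add: x_def algebra_simps)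
    ultimately have "1 / (w - b) - h w = - inverse b * x ^ M / (1 - x)"
      using b0 x1 by (simp add: field_simps)
    then have "norm (1 / (w - b) - h w) = norm x ^ M / (norm b * norm (1 - x))"
      by (simp add: norm_mult norm_divide norm_power norm_inverse divide_inverse)
    also have "\<dots> \<le> (1/2) ^ M / (2 * B * (1/2))"
      using nx n1x b B by (intro frac_le mult_mono power_mono) auto
    also have "\<dots> \<le> \<delta>" using M B by (simp add: field_simps)
    finally show ?thesis .
  qed
  ultimately show "\<exists>h. poly_approximable K h \<and> (\<forall>w\<in>K. norm (1 / (w - b) - h w) \<le> \<delta>)"
    by blast
qed

lemma poly_approximable_inverse_move_pole:
  assumes K: "compact K" and d: "d > 0" and Kd: "\<forall>w\<in>K. norm (w - b) \<ge> d"
    and approx: "poly_approximable K (\<lambda>w. 1 / (w - b))" and bb: "norm (b' - b) \<le> d / 2"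
  shows "poly_approximable K (\<lambda>w. 1 / (w - b'))"
proof (rule poly_approximable_uniform_limit)
  fix \<delta> :: real assume "\<delta> > 0"
  obtain M where M: "(1/2::real) ^ M < \<delta> * d / 2"
    using real_arch_pow_inv[of "\<delta> * d / 2" "1/2"] \<open>\<delta> > 0\<close> d by auto
  define c where "c = b' - b"
  \<comment> \<open>a partial sum of \<open>1 / (w - b') = \<Sum>k. c ^ k / (w - b) ^ Suc k\<close>\<close>
  define h where "h = (\<lambda>w. \<Sum>k<M. c ^ k * (1 / (w - b)) ^ Suc k)"
  have "poly_approximable K h" unfolding h_def
    by (intro poly_approximable_cmult poly_approximable_sum poly_approximable_power approx K) auto
  moreover have "norm (1 / (w - b') - h w) \<le> \<delta>" if w: "w \<in> K" for w
  proof -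
    define u where "u = 1 / (w - b)"
    define x where "x = c * u"
    have wb: "norm (w - b) \<ge> d" using Kd w by blast
    then have wb0: "w - b \<noteq> 0" using d by auto
    have "1 / norm (w - b) \<le> 1 / d"
      using wb d by (intro divide_left_mono mult_pos_pos) auto
    then have nu: "norm u \<le> 1 / d" by (simp add: u_def norm_divide)
    have "norm x \<le> (d/2) * (1/d)" unfolding x_def norm_mult
      using bb nu d by (intro mult_mono) (auto simp: c_def)
    then have nx: "norm x \<le> 1/2" using d by simp
    then have x1: "1 - x \<noteq> 0" by auto
    have n1x: "norm (1 - x) \<ge> 1/2"
      using norm_triangle_ineq[of "1 - x" x] nx by simp
    have "h w = (\<Sum>k<M. c ^ k * u ^ Suc k)" by (simp add: h_def u_def)
    also have "\<dots> = u * (\<Sum>k<M. x ^ k)"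
      by (simp add: x_def sum_distrib_left power_mult_distrib mult_ac)
    finally have "h w = u * (\<Sum>k<M. x ^ k)" .
    then have hw: "h w = u * ((1 - x ^ M) / (1 - x))"
      using x1 by (simp add: sum_gp_strict)
    have "w - b' = (w - b) * (1 - x)" using wb0 by (simp add: x_def u_def c_def field_simps)
    then have "1 / (w - b') = u / (1 - x)" using wb0 x1 by (simp add: u_def)
    then have "1 / (w - b') - h w = u * x ^ M / (1 - x)"
      using x1 by (simp add: hw diff_divide_distrib[symmetric] algebra_simps)
    then have "norm (1 / (w - b') - h w) = norm u * norm x ^ M / norm (1 - x)"
      by (simp add: norm_mult norm_divide norm_power)
    also have "\<dots> \<le> (1 / d) * (1/2) ^ M / (1/2)"
      using nx n1x nu d by (intro frac_le mult_mono power_mono) auto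
    also have "\<dots> \<le> \<delta>" using M d by (simp add: field_simps)
    finally show ?thesis .
  qed
  ultimately show "\<exists>h. poly_approximable K h \<and> (\<forall>w\<in>K. norm (1 / (w - b') - h w) \<le> \<delta>)"
    by blast
qed

text \<open>The pole is pushed from \<open>b\<close> to infinity in steps of length \<open>d/2\<close> along the ray \<open>b + t v\<close>,
  which stays at distance \<open>d\<close> from \<open>K\<close>; the induction runs backwards from a far point.\<close>

lemma poly_approximable_inverse_ray:
  assumes K: "compact K" and d: "d > 0" and v: "norm v = 1"
    and far: "\<forall>t\<ge>0. \<forall>w\<in>K. d \<le> norm (w - (b + of_real t * v))"
  shows "poly_approximable K (\<lambda>w. 1 / (w - b))"
proof -
  obtain B0 where B0: "\<forall>w\<in>K. norm w \<le> B0"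
    using compact_imp_bounded[OF K] bounded_iff by metis
  define B where "B = max B0 1"
  have B: "B > 0" "\<forall>w\<in>K. norm w \<le> B" using B0 by (auto simp: B_def intro: order_trans)
  define s where "s = d / 2"
  have s: "s > 0" using d by (simp add: s_def)
  obtain n :: nat where "(2 * B + norm b) / s \<le> real n" using real_arch_simple by blast
  then have ns: "2 * B + norm b \<le> real n * s" using s by (simp add: field_simps)
  define pole where "pole = (\<lambda>m::nat. b + of_real (real m * s) * v)"
  let ?P = "\<lambda>m. poly_approximable K (\<lambda>w. 1 / (w - pole m))"
  have "?P n"
  proof (rule poly_approximable_inverse_far[OF K B(2,1)])
    have "real n * s = norm (of_real (real n * s) * v)" using v s by (simp add: norm_mult)
    also have "\<dots> \<le> norm (pole n) + norm b"
      unfolding pole_def by (metis add_diff_cancel_left' norm_triangle_sub add.commute norm_minus_commute)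
    finally show "2 * B \<le> norm (pole n)" using ns by linarith
  qed
  moreover have "?P m" if "?P (Suc m)" for m
  proof (rule poly_approximable_inverse_move_pole[OF K d _ that])
    have "real (Suc m) * s \<ge> 0" using s by simp
    then show "\<forall>w\<in>K. d \<le> norm (w - pole (Suc m))" using far unfolding pole_def by blast
    have "pole m - pole (Suc m) = - of_real s * v" by (simp add: pole_def algebra_simps)
    then show "norm (pole m - pole (Suc m)) \<le> d / 2" using v s by (simp add: norm_mult s_def)
  qed
  ultimately have "?P 0" by (rule inc_induct[of 0 n, rotated]) auto
  then show ?thesis by (simp add: pole_def)
qed

lemma poly_approximable_inverse_poly:
  assumes K: "compact K" and q: "q \<noteq> 0"
    and roots: "\<And>z. poly q z = 0 \<Longrightarrow> poly_approximable K (\<lambda>w. 1 / (w - z))"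
  shows "poly_approximable K (\<lambda>w. 1 / poly q w)"
proof -
  define Z where "Z = {z. poly q z = 0}"
  have dec: "poly q w = lead_coeff q * (\<Prod>z\<in>Z. (w - z) ^ order z q)" for w
  proof -
    have "poly q w = poly (smult (lead_coeff q) (\<Prod>z\<in>Z. [:-z, 1:] ^ order z q)) w"
      unfolding Z_def by (simp only: complex_poly_decompose)
    also have "\<dots> = lead_coeff q * (\<Prod>z\<in>Z. (w - z) ^ order z q)"
      by (simp add: poly_prod poly_power)
    finally show ?thesis .
  qed
  have "1 / poly q w = inverse (lead_coeff q) * (\<Prod>z\<in>Z. (1 / (w - z)) ^ order z q)" for w
  proof -
    have "1 / poly q w = inverse (lead_coeff q) * inverse (\<Prod>z\<in>Z. (w - z) ^ order z q)"
      by (simp only: dec inverse_eq_divide[symmetric] inverse_mult_distrib)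
    also have "inverse (\<Prod>z\<in>Z. (w - z) ^ order z q) = (\<Prod>z\<in>Z. inverse ((w - z) ^ order z q))"
      using prod_inversef[of "\<lambda>z. (w - z) ^ order z q" Z] by (simp add: o_def)
    also have "\<dots> = (\<Prod>z\<in>Z. (1 / (w - z)) ^ order z q)"
      by (simp add: power_inverse divide_inverse)
    finally show ?thesis .
  qed
  moreover have "poly_approximable K
      (\<lambda>w. inverse (lead_coeff q) * (\<Prod>z\<in>Z. (1 / (w - z)) ^ order z q))"
    by (intro poly_approximable_cmult poly_approximable_prod poly_approximable_power K
        poly_roots_finite[OF q, folded Z_def] roots) (auto simp: Z_def)
  ultimately show ?thesis by simp
qed

section \<open>Polynomials separating half planes and rectangles\<close>

lemma compact_Re_bounded_away_from_0:
  assumes "compact K" "\<forall>w\<in>K. Re w \<noteq> 0"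
  obtains g where "g > 0" "\<And>w. w \<in> K \<Longrightarrow> g \<le> \<bar>Re w\<bar>"
proof (cases "K = {}")
  case True
  then show ?thesis using that[of 1] by auto
next
  case False
  have "continuous_on K (\<lambda>w. \<bar>Re w\<bar>)" by (intro continuous_intros)
  then obtain w0 where "w0 \<in> K" "\<forall>w\<in>K. \<bar>Re w0\<bar> \<le> \<bar>Re w\<bar>"
    using continuous_attains_inf[OF assms(1) False] by blast
  then show ?thesis using that[of "\<bar>Re w0\<bar>"] assms(2) by auto
qed

lemma poly_approximable_inverse_imaginary:
  assumes K: "compact K" and K0: "\<forall>w\<in>K. Re w \<noteq> 0" and z: "Re z = 0"
  shows "poly_approximable K (\<lambda>w. 1 / (w - z))"
proof -
  obtain g where g: "g > 0" "\<And>w. w \<in> K \<Longrightarrow> g \<le> \<bar>Re w\<bar>"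
    using compact_Re_bounded_away_from_0[OF K K0] by blast
  have "g \<le> norm (w - (z + of_real t * \<i>))" if "w \<in> K" for w t
    using g(2)[OF that] abs_Re_le_cmod[of "w - (z + of_real t * \<i>)"] z by simp
  then show ?thesis by (intro poly_approximable_inverse_ray[OF K g(1), of \<i>]) auto
qed

lemma Re_eq_0_if_power_sum_eq_0:
  fixes z :: complex
  assumes "n > 0" "(1 + z) ^ n + (z - 1) ^ n = 0"
  shows "Re z = 0"
proof -
  have "norm (1 + z) ^ n = norm (z - 1) ^ n"
    using arg_cong[OF assms(2)[unfolded add_eq_0_iff], of norm] by (simp add: norm_power)
  then have "norm (1 + z) = norm (z - 1)"
    using power_eq_imp_eq_base[OF _ norm_ge_zero norm_ge_zero assms(1)] by blast
  then have "norm (1 + z)^2 = norm (z - 1)^2" by simp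
  then have "(1 + Re z)^2 + (Im z)^2 = (Re z - 1)^2 + (Im z)^2" by (simp add: cmod_power2)
  then show ?thesis by (simp add: power2_eq_square algebra_simps)
qed

lemma norm_diff_one_le_norm_add_one:
  fixes w :: complex
  assumes "0 \<le> g" "g \<le> Re w" "norm w \<le> B"
  shows "norm (w - 1) \<le> sqrt (1 - 4 * g / (B + 1)^2) * norm (1 + w)"
proof -
  have B: "B + 1 > 0" using assms(3) norm_ge_zero[of w] by linarith
  have "norm (1 + w) \<le> B + 1" using assms(3) norm_triangle_ineq[of 1 w] by simp
  then have "norm (1 + w)^2 / (B + 1)^2 \<le> 1" using B by (simp add: power_mono)
  then have "4 * g * (norm (1 + w)^2 / (B + 1)^2) \<le> 4 * g"
    by (rule mult_left_le) (use assms(1) in auto)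
  moreover have "norm (w - 1)^2 = norm (1 + w)^2 - 4 * Re w"
    unfolding cmod_power2 by (simp add: power2_eq_square algebra_simps)
  ultimately have "norm (w - 1)^2 \<le> norm (1 + w)^2 - 4 * g * (norm (1 + w)^2 / (B + 1)^2)"
    using assms(2) by linarith
  also have "\<dots> = (1 - 4 * g / (B + 1)^2) * norm (1 + w)^2"
    by (simp add: algebra_simps)
  finally have "sqrt (norm (w - 1)^2) \<le> sqrt ((1 - 4 * g / (B + 1)^2) * norm (1 + w)^2)"
    by (rule real_sqrt_le_mono)
  then show ?thesis by (simp add: real_sqrt_mult)
qed

lemma norm_power_fraction_le:
  fixes a b :: complex and \<rho> :: real
  assumes "0 \<le> \<rho>" "\<rho> ^ n \<le> 1/2" "norm b \<le> \<rho> * norm a" "a \<noteq> 0"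
  shows "norm (b ^ n / (a ^ n + b ^ n)) \<le> 2 * \<rho> ^ n"
proof -
  have "norm b ^ n \<le> (\<rho> * norm a) ^ n" using assms(3) by (rule power_mono) simp
  then have bn: "norm b ^ n \<le> \<rho> ^ n * norm a ^ n" by (simp add: power_mult_distrib)
  have an: "norm a ^ n > 0" using assms by simp
  have "\<rho> ^ n * norm a ^ n \<le> (1/2) * norm a ^ n" using assms(2) by (rule mult_right_mono) simp
  then have "norm a ^ n / 2 \<le> norm a ^ n - norm b ^ n" using bn by linarith
  also have "\<dots> \<le> norm (a ^ n + b ^ n)"
    using norm_diff_ineq[of "a^n" "b^n"] by (simp add: norm_power)
  finally have den: "norm a ^ n / 2 \<le> norm (a ^ n + b ^ n)" .
  have "norm (b ^ n / (a ^ n + b ^ n)) = norm b ^ n / norm (a ^ n + b ^ n)"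
    by (simp add: norm_divide norm_power)
  also have "\<dots> \<le> (\<rho> ^ n * norm a ^ n) / (norm a ^ n / 2)"
    using bn den an assms(1) by (intro frac_le) auto
  also have "\<dots> = 2 * \<rho> ^ n" using an assms(4) by (simp add: field_simps)
  finally show ?thesis .
qed

text \<open>\<open>half_plane_fraction n w = 1 / (1 + ((w - 1) / (w + 1))\<^sup>n)\<close>. Since \<open>\<bar>w - 1\<bar> < \<bar>w + 1\<bar>\<close> exactly
  on the right half plane, it tends to \<open>1\<close> there and to \<open>0\<close> on the left half plane; its poles lie
  on the imaginary axis.\<close>

definition half_plane_fraction :: "nat \<Rightarrow> complex \<Rightarrow> complex" where
  "half_plane_fraction n w = (1 + w) ^ n / ((1 + w) ^ n + (w - 1) ^ n)"

lemma half_plane_fraction_estimates: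
  fixes w :: complex and g B :: real
  defines "\<rho> \<equiv> sqrt (1 - 4 * g / (B + 1)^2)"
  assumes g: "0 \<le> g" "g \<le> \<bar>Re w\<bar>" and B: "norm w \<le> B"
    and \<rho>: "0 \<le> \<rho>" "\<rho> ^ n \<le> 1/2" and n: "n > 0"
  shows "0 < Re w \<Longrightarrow> norm (half_plane_fraction n w - 1) \<le> 2 * \<rho> ^ n"
    and "Re w < 0 \<Longrightarrow> norm (half_plane_fraction n w) \<le> 2 * \<rho> ^ n"
proof -
  assume w: "0 < Re w"
  then have "norm (w - 1) \<le> \<rho> * norm (1 + w)"
    unfolding \<rho>_def using g B by (intro norm_diff_one_le_norm_add_one) auto
  moreover have "1 + w \<noteq> 0" using w by (auto simp: complex_eq_iff)
  moreover have "(1 + w) ^ n + (w - 1) ^ n \<noteq> 0" using Re_eq_0_if_power_sum_eq_0[OF n, of w] w by auto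
  then have "half_plane_fraction n w - 1 = - ((w - 1) ^ n / ((1 + w) ^ n + (w - 1) ^ n))"
    by (simp add: half_plane_fraction_def field_simps)
  ultimately show "norm (half_plane_fraction n w - 1) \<le> 2 * \<rho> ^ n"
    using norm_power_fraction_le[OF \<rho>] by simp
next
  assume w: "Re w < 0"
  then have "norm (- w - 1) \<le> \<rho> * norm (1 + - w)"
    unfolding \<rho>_def using g B by (intro norm_diff_one_le_norm_add_one) auto
  then have "norm (1 + w) \<le> \<rho> * norm (w - 1)"
    by (simp add: norm_minus_commute minus_diff_commute add.commute)
  moreover have "w - 1 \<noteq> 0" using w by (auto simp: complex_eq_iff)
  moreover have "half_plane_fraction n w = (1 + w) ^ n / ((w - 1) ^ n + (1 + w) ^ n)"
    by (simp add: half_plane_fraction_def add.commute)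
  ultimately show "norm (half_plane_fraction n w) \<le> 2 * \<rho> ^ n"
    using norm_power_fraction_le[OF \<rho>] by simp
qed

lemma poly_approximable_half_plane_fraction:
  assumes K: "compact K" and K0: "\<forall>w\<in>K. Re w \<noteq> 0" and n: "n > 0"
  shows "poly_approximable K (half_plane_fraction n)"
proof -
  define D :: "complex poly" where "D = [:1, 1:] ^ n + [:-1, 1:] ^ n"
  have poly_D: "poly D w = (1 + w) ^ n + (w - 1) ^ n" for w by (simp add: D_def)
  have "D \<noteq> 0" using poly_D[of 1] n by (auto simp: zero_power)
  have "poly_approximable K (\<lambda>w. (1 + w) ^ n * (1 / poly D w))"
    by (intro poly_approximable_mult poly_approximable_power poly_approximable_add
        poly_approximable_const poly_approximable_ident K
        poly_approximable_inverse_poly[OF K \<open>D \<noteq> 0\<close>] poly_approximable_inverse_imaginary[OF K K0]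
        Re_eq_0_if_power_sum_eq_0[OF n]) (simp add: poly_D)
  then show ?thesis by (simp add: half_plane_fraction_def[abs_def] poly_D)
qed

lemma half_plane_separating_poly:
  assumes K: "compact K" and K0: "\<forall>w\<in>K. Re w \<noteq> 0" and \<delta>: "\<delta> > 0"
  shows "\<exists>q. \<forall>w\<in>K. (0 < Re w \<longrightarrow> norm (poly q w - 1) \<le> \<delta>) \<and> (Re w < 0 \<longrightarrow> norm (poly q w) \<le> \<delta>)"
proof -
  obtain g where g: "g > 0" "\<And>w. w \<in> K \<Longrightarrow> g \<le> \<bar>Re w\<bar>"
    using compact_Re_bounded_away_from_0[OF K K0] by blast
  obtain B0 where B0: "\<forall>w\<in>K. norm w \<le> B0" using compact_imp_bounded[OF K] bounded_iff by metis
  define B where "B = max B0 g"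
  have B: "\<And>w. w \<in> K \<Longrightarrow> norm w \<le> B" "g \<le> B" using B0 by (auto simp: B_def intro: order_trans)
  define \<rho> where "\<rho> = sqrt (1 - 4 * g / (B + 1)^2)"
  have "0 \<le> (B - 1)^2" by simp
  then have "4 * g \<le> (B + 1)^2"
    using B(2) by (simp add: power2_eq_square algebra_simps)
  then have \<rho>: "0 \<le> \<rho>" "\<rho> < 1" using g(1) B(2) by (auto simp: \<rho>_def)
  obtain n where n: "\<rho> ^ n < min (1/2) (\<delta>/4)"
    using real_arch_pow_inv[of "min (1/2) (\<delta>/4)" \<rho>] \<rho> \<delta> by auto
  have n0: "n > 0" using n by (cases n) auto
  obtain q where q: "\<forall>w\<in>K. norm (half_plane_fraction n w - poly q w) < \<delta>/2"
    using poly_approximable_half_plane_fraction[OF K K0 n0] \<delta>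
    unfolding poly_approximable_def by (meson half_gt_zero)
  have "(0 < Re w \<longrightarrow> norm (poly q w - 1) \<le> \<delta>) \<and> (Re w < 0 \<longrightarrow> norm (poly q w) \<le> \<delta>)"
    if w: "w \<in> K" for w
  proof (intro conjI impI)
    note estimates = half_plane_fraction_estimates[of g w B n, folded \<rho>_def]
    have hyps: "0 \<le> g" "g \<le> \<bar>Re w\<bar>" "norm w \<le> B" "\<rho> ^ n \<le> 1/2"
      using g(1) g(2)[OF w] B(1)[OF w] n by auto
    have qw: "norm (poly q w - half_plane_fraction n w) < \<delta>/2"
      using q w by (simp add: norm_minus_commute)
    {
      assume "0 < Re w"
      then have "norm (half_plane_fraction n w - 1) \<le> 2 * \<rho> ^ n"
        using estimates(1) hyps \<rho>(1) n0 by blast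
      moreover have "norm (poly q w - 1)
          \<le> norm (poly q w - half_plane_fraction n w) + norm (half_plane_fraction n w - 1)"
        by (rule norm_diff_triangle_le) auto
      ultimately show "norm (poly q w - 1) \<le> \<delta>" using qw n by linarith
    next
      assume "Re w < 0"
      then have "norm (half_plane_fraction n w) \<le> 2 * \<rho> ^ n"
        using estimates(2) hyps \<rho>(1) n0 by blast
      moreover have "norm (poly q w) \<le> norm (poly q w - half_plane_fraction n w) + norm (half_plane_fraction n w)"
        using norm_triangle_sub[of "poly q w" "half_plane_fraction n w"] by linarith
      ultimately show "norm (poly q w) \<le> \<delta>" using qw n by linarith
    }
  qed
  then show ?thesis by blast
qed

lemma line_separating_poly:
  assumes K: "compact K" and Kc: "\<forall>w\<in>K. Re (e * w) \<noteq> c" and \<delta>: "\<delta> > 0"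
  shows "\<exists>q. \<forall>w\<in>K. (c < Re (e * w) \<longrightarrow> norm (poly q w - 1) \<le> \<delta>) \<and>
                    (Re (e * w) < c \<longrightarrow> norm (poly q w) \<le> \<delta>)"
proof -
  let ?h = "\<lambda>w. e * w - of_real c"
  have "compact (?h ` K)" by (intro compact_continuous_image continuous_intros K)
  moreover have "\<forall>u\<in>?h ` K. Re u \<noteq> 0" using Kc by auto
  ultimately obtain q where q: "\<forall>u\<in>?h ` K. (0 < Re u \<longrightarrow> norm (poly q u - 1) \<le> \<delta>) \<and>
      (Re u < 0 \<longrightarrow> norm (poly q u) \<le> \<delta>)"
    using half_plane_separating_poly \<delta> by blast
  have "poly (pcompose q [:- of_real c, e:]) w = poly q (?h w)" for w
    by (simp add: poly_pcompose algebra_simps)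
  then show ?thesis using q by (intro exI[of _ "pcompose q [:- of_real c, e:]"]) auto
qed

lemma line_peak_factor_poly:
  assumes K: "compact K" and Kc: "\<forall>w\<in>K. Re (e * w) \<noteq> c" and \<epsilon>: "0 < \<epsilon>" "\<epsilon> \<le> 1/8"
  shows "\<exists>q. \<forall>w\<in>K. norm (poly q w) \<le> 9/8 \<and> (c < Re (e * w) \<longrightarrow> 7/8 \<le> norm (poly q w)) \<and>
                    (Re (e * w) < c \<longrightarrow> norm (poly q w) \<le> \<epsilon>)"
proof -
  obtain q where q: "\<forall>w\<in>K. (c < Re (e * w) \<longrightarrow> norm (poly q w - 1) \<le> \<epsilon>) \<and>
      (Re (e * w) < c \<longrightarrow> norm (poly q w) \<le> \<epsilon>)"
    using line_separating_poly[OF K Kc \<epsilon>(1)] by blast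
  have "norm (poly q w) \<le> 9/8 \<and> (c < Re (e * w) \<longrightarrow> 7/8 \<le> norm (poly q w))" if w: "w \<in> K" for w
  proof (cases "c < Re (e * w)")
    case True
    then have "norm (poly q w - 1) \<le> \<epsilon>" using q w by blast
    then show ?thesis
      using \<epsilon> norm_triangle_ineq[of "poly q w - 1" 1] norm_triangle_ineq[of "1 - poly q w" "poly q w"]
      by (auto simp: norm_minus_commute)
  next
    case False
    then have "Re (e * w) < c" using Kc w by force
    then show ?thesis using q w \<epsilon> False by force
  qed
  then show ?thesis using q by blast
qed

lemma norm_mult4_le:
  fixes x1 x2 x3 x4 :: complex
  assumes "norm x1 \<le> M" "norm x2 \<le> M" "norm x3 \<le> M" "norm x4 \<le> M"
    and "norm x1 \<le> s \<or> norm x2 \<le> s \<or> norm x3 \<le> s \<or> norm x4 \<le> s" and "0 \<le> s"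
  shows "norm (x1 * x2 * x3 * x4) \<le> s * M * M * M"
proof -
  have M: "0 \<le> M" using assms(1) norm_ge_zero order_trans by metis
  have le: "a * b * c * d \<le> s * M * M * M"
    if "a \<le> s" "b \<le> M" "c \<le> M" "d \<le> M" "0 \<le> a" "0 \<le> b" "0 \<le> c" "0 \<le> d" for a b c d :: real
    using that M assms(6) by (intro mult_mono) auto
  from assms(5) show ?thesis
  proof (elim disjE)
    assume "norm x1 \<le> s"
    then show ?thesis using le[of "norm x1" "norm x2" "norm x3" "norm x4"] assms(1-4) by (simp add: norm_mult)
  next
    assume "norm x2 \<le> s"
    then show ?thesis using le[of "norm x2" "norm x1" "norm x3" "norm x4"] assms(1-4) by (simp add: norm_mult mult_ac)
  next
    assume "norm x3 \<le> s"
    then show ?thesis using le[of "norm x3" "norm x1" "norm x2" "norm x4"] assms(1-4) by (simp add: norm_mult mult_ac)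
  next
    assume "norm x4 \<le> s"
    then show ?thesis using le[of "norm x4" "norm x1" "norm x2" "norm x3"] assms(1-4) by (simp add: norm_mult mult_ac)
  qed
qed

lemma rectangle_peak_poly:
  assumes K: "compact K" and \<delta>: "\<delta> > 0"
    and K_boundary: "\<forall>w\<in>K. Re w \<noteq> c1 \<and> Re w \<noteq> c2 \<and> Im w \<noteq> d1 \<and> Im w \<noteq> d2"
  shows "\<exists>q. \<forall>w\<in>K. norm (poly q w) \<le> 2 \<and>
            (c1 < Re w \<and> Re w < c2 \<and> d1 < Im w \<and> Im w < d2 \<longrightarrow> norm (poly q w) \<ge> 1/2) \<and>
            (\<not> (c1 < Re w \<and> Re w < c2 \<and> d1 < Im w \<and> Im w < d2) \<longrightarrow> norm (poly q w) \<le> \<delta>)"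
proof -
  define \<epsilon> where "\<epsilon> = min (\<delta>/2) (1/8)"
  have \<epsilon>: "\<epsilon> > 0" "\<epsilon> \<le> 1/8" "\<epsilon> \<le> \<delta>/2" using \<delta> by (auto simp: \<epsilon>_def)
  obtain q1 where q1: "\<forall>w\<in>K. norm (poly q1 w) \<le> 9/8 \<and> (c1 < Re w \<longrightarrow> 7/8 \<le> norm (poly q1 w)) \<and>
      (Re w < c1 \<longrightarrow> norm (poly q1 w) \<le> \<epsilon>)"
    using line_peak_factor_poly[OF K _ \<epsilon>(1,2), of 1 c1] K_boundary by auto
  obtain q2 where q2: "\<forall>w\<in>K. norm (poly q2 w) \<le> 9/8 \<and> (Re w < c2 \<longrightarrow> 7/8 \<le> norm (poly q2 w)) \<and>
      (c2 < Re w \<longrightarrow> norm (poly q2 w) \<le> \<epsilon>)"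
    using line_peak_factor_poly[OF K _ \<epsilon>(1,2), of "-1" "-c2"] K_boundary by auto
  obtain q3 where q3: "\<forall>w\<in>K. norm (poly q3 w) \<le> 9/8 \<and> (d1 < Im w \<longrightarrow> 7/8 \<le> norm (poly q3 w)) \<and>
      (Im w < d1 \<longrightarrow> norm (poly q3 w) \<le> \<epsilon>)"
    using line_peak_factor_poly[OF K _ \<epsilon>(1,2), of "-\<i>" d1] K_boundary by auto
  obtain q4 where q4: "\<forall>w\<in>K. norm (poly q4 w) \<le> 9/8 \<and> (Im w < d2 \<longrightarrow> 7/8 \<le> norm (poly q4 w)) \<and>
      (d2 < Im w \<longrightarrow> norm (poly q4 w) \<le> \<epsilon>)"
    using line_peak_factor_poly[OF K _ \<epsilon>(1,2), of \<i> "-d2"] K_boundary by auto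
  show ?thesis
  proof (intro exI[of _ "q1 * q2 * q3 * q4"] ballI conjI impI)
    fix w assume w: "w \<in> K"
    let ?x1 = "poly q1 w" and ?x2 = "poly q2 w" and ?x3 = "poly q3 w" and ?x4 = "poly q4 w"
    have prod: "poly (q1 * q2 * q3 * q4) w = ?x1 * ?x2 * ?x3 * ?x4" by simp
    have u: "norm ?x1 \<le> 9/8" "norm ?x2 \<le> 9/8" "norm ?x3 \<le> 9/8" "norm ?x4 \<le> 9/8"
      using q1 q2 q3 q4 w by auto
    show "norm (poly (q1 * q2 * q3 * q4) w) \<le> 2"
      using norm_mult4_le[OF u, of "9/8"] u unfolding prod by simp
    show "norm (poly (q1 * q2 * q3 * q4) w) \<ge> 1/2"
      if "c1 < Re w \<and> Re w < c2 \<and> d1 < Im w \<and> Im w < d2"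
    proof -
      have "7/8 \<le> norm ?x1" "7/8 \<le> norm ?x2" "7/8 \<le> norm ?x3" "7/8 \<le> norm ?x4"
        using that q1 q2 q3 q4 w by auto
      then have "(7/8) * (7/8) * (7/8) * (7/8) \<le> norm ?x1 * norm ?x2 * norm ?x3 * norm ?x4"
        by (intro mult_mono) auto
      then show ?thesis unfolding prod norm_mult by simp
    qed
    show "norm (poly (q1 * q2 * q3 * q4) w) \<le> \<delta>"
      if "\<not> (c1 < Re w \<and> Re w < c2 \<and> d1 < Im w \<and> Im w < d2)"
    proof -
      have "Re w < c1 \<or> c2 < Re w \<or> Im w < d1 \<or> d2 < Im w" using that K_boundary w by force
      then have "norm ?x1 \<le> \<epsilon> \<or> norm ?x2 \<le> \<epsilon> \<or> norm ?x3 \<le> \<epsilon> \<or> norm ?x4 \<le> \<epsilon>"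
        using q1 q2 q3 q4 w by blast
      then have "norm (?x1 * ?x2 * ?x3 * ?x4) \<le> \<epsilon> * (9/8) * (9/8) * (9/8)"
        using norm_mult4_le[OF u] \<epsilon>(1) by simp
      also have "\<dots> \<le> \<delta>" using \<epsilon> by simp
      finally show ?thesis unfolding prod .
    qed
  qed
qed

section \<open>Sets with thin coordinate projections\<close>

lemma interior_eq_empty_obtains_gap:
  fixes S :: "real set"
  assumes "interior S = {}" "lo < hi"
  obtains c where "lo < c" "c < hi" "c \<notin> S"
proof -
  have "\<not> {lo<..<hi} \<subseteq> S"
    using interior_maximal[of "{lo<..<hi}" S] assms by auto
  then obtain c where "c \<in> {lo<..<hi}" "c \<notin> S" by blast
  then show ?thesis using that by auto
qed

lemma totally_disconnected_if_thin_projections: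
  fixes E :: "'a::euclidean_space set"
  assumes thin: "\<And>b. b \<in> Basis \<Longrightarrow> interior ((\<lambda>u. u \<bullet> b) ` E) = {}"
  shows "totally_disconnected E"
  unfolding totally_disconnected_def
proof (intro ballI equalityI subsetI)
  fix x y assume "x \<in> E" "y \<in> connected_component_set E x"
  then obtain T where T: "connected T" "T \<subseteq> E" "x \<in> T" "y \<in> T"
    unfolding connected_component_def by blast
  have "x \<bullet> b = y \<bullet> b" if b: "b \<in> Basis" for b
  proof (rule ccontr)
    assume "x \<bullet> b \<noteq> y \<bullet> b"
    define lo where "lo = min (x \<bullet> b) (y \<bullet> b)"
    define hi where "hi = max (x \<bullet> b) (y \<bullet> b)"
    have "lo < hi" using \<open>x \<bullet> b \<noteq> y \<bullet> b\<close> by (simp add: lo_def hi_def min_def max_def)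
    have "lo \<in> (\<lambda>u. u \<bullet> b) ` T" "hi \<in> (\<lambda>u. u \<bullet> b) ` T"
      using T(3,4) by (auto simp: lo_def hi_def min_def max_def)
    moreover have "connected ((\<lambda>u. u \<bullet> b) ` T)"
      by (intro connected_continuous_image continuous_intros T(1))
    ultimately have "{lo..hi} \<subseteq> (\<lambda>u. u \<bullet> b) ` T" by (intro connected_contains_Icc)
    then have "{lo..hi} \<subseteq> (\<lambda>u. u \<bullet> b) ` E" using T(2) by blast
    moreover obtain c where "lo < c" "c < hi" "c \<notin> (\<lambda>u. u \<bullet> b) ` E"
      using interior_eq_empty_obtains_gap[OF thin[OF b] \<open>lo < hi\<close>] by blast
    ultimately show False by (meson atLeastAtMost_iff less_imp_le subsetD)
  qed
  then have "x = y" by (rule euclidean_eqI)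
  then show "y \<in> {x}" by simp
qed (simp add: connected_component_refl)

lemma coordinate_peak_poly:
  fixes E :: "(complex^'n) set"
  assumes E: "compact E" and \<eta>: "\<eta> > 0" and \<delta>: "\<delta> > 0"
    and thin_Re: "interior ((\<lambda>u. Re (u$k)) ` E) = {}" and thin_Im: "interior ((\<lambda>u. Im (u$k)) ` E) = {}"
  shows "\<exists>q. norm (poly q (z$k)) \<ge> 1/2 \<and> (\<forall>u\<in>E. norm (poly q (u$k)) \<le> 2) \<and>
     (\<forall>u\<in>E. (\<bar>Re (u$k) - Re (z$k)\<bar> \<ge> \<eta> \<or> \<bar>Im (u$k) - Im (z$k)\<bar> \<ge> \<eta>) \<longrightarrow> norm (poly q (u$k)) \<le> \<delta>)"
proof -
  define x where "x = Re (z$k)"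
  define y where "y = Im (z$k)"
  obtain c1 where c1: "x - \<eta> < c1" "c1 < x" "c1 \<notin> (\<lambda>u. Re (u$k)) ` E"
    using interior_eq_empty_obtains_gap[OF thin_Re, of "x - \<eta>" x] \<eta> by auto
  obtain c2 where c2: "x < c2" "c2 < x + \<eta>" "c2 \<notin> (\<lambda>u. Re (u$k)) ` E"
    using interior_eq_empty_obtains_gap[OF thin_Re, of x "x + \<eta>"] \<eta> by auto
  obtain d1 where d1: "y - \<eta> < d1" "d1 < y" "d1 \<notin> (\<lambda>u. Im (u$k)) ` E"
    using interior_eq_empty_obtains_gap[OF thin_Im, of "y - \<eta>" y] \<eta> by auto
  obtain d2 where d2: "y < d2" "d2 < y + \<eta>" "d2 \<notin> (\<lambda>u. Im (u$k)) ` E"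
    using interior_eq_empty_obtains_gap[OF thin_Im, of y "y + \<eta>"] \<eta> by auto
  define K where "K = insert (z$k) ((\<lambda>u. u$k) ` E)"
  have "compact K" unfolding K_def
    by (intro compact_insert compact_continuous_image continuous_intros E)
  moreover have "\<forall>w\<in>K. Re w \<noteq> c1 \<and> Re w \<noteq> c2 \<and> Im w \<noteq> d1 \<and> Im w \<noteq> d2"
    using c1 c2 d1 d2 by (force simp: K_def x_def y_def)
  ultimately obtain q where q: "\<forall>w\<in>K. norm (poly q w) \<le> 2 \<and>
            (c1 < Re w \<and> Re w < c2 \<and> d1 < Im w \<and> Im w < d2 \<longrightarrow> norm (poly q w) \<ge> 1/2) \<and>
            (\<not> (c1 < Re w \<and> Re w < c2 \<and> d1 < Im w \<and> Im w < d2) \<longrightarrow> norm (poly q w) \<le> \<delta>)"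
    using rectangle_peak_poly \<delta> by blast
  show ?thesis
  proof (intro exI conjI ballI impI)
    show "norm (poly q (z$k)) \<ge> 1/2" using q c1 c2 d1 d2 by (simp add: K_def x_def y_def)
    fix u assume u: "u \<in> E"
    then show "norm (poly q (u$k)) \<le> 2" using q by (simp add: K_def)
    assume "\<bar>Re (u$k) - Re (z$k)\<bar> \<ge> \<eta> \<or> \<bar>Im (u$k) - Im (z$k)\<bar> \<ge> \<eta>"
    then have "\<not> (c1 < Re (u$k) \<and> Re (u$k) < c2 \<and> d1 < Im (u$k) \<and> Im (u$k) < d2)"
      using c1 c2 d1 d2 unfolding x_def y_def by arith
    then show "norm (poly q (u$k)) \<le> \<delta>" using q u by (simp add: K_def)
  qed
qed

lemma far_component_if_dist_ge:
  fixes u z :: "complex^'n"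
  assumes "2 * real CARD('n) * \<eta> \<le> dist u z"
  obtains k where "\<eta> \<le> \<bar>Re (u$k) - Re (z$k)\<bar> \<or> \<eta> \<le> \<bar>Im (u$k) - Im (z$k)\<bar>"
proof (rule ccontr)
  assume "\<not> thesis"
  then have close: "\<bar>Re (u$k) - Re (z$k)\<bar> < \<eta> \<and> \<bar>Im (u$k) - Im (z$k)\<bar> < \<eta>" for k
    using that by (meson not_le)
  have "dist u z \<le> (\<Sum>k\<in>UNIV. norm ((u - z) $ k))"
    unfolding dist_norm norm_vec_def by (rule L2_set_le_sum) simp
  also have "\<dots> < (\<Sum>k\<in>(UNIV::'n set). 2 * \<eta>)"
  proof (rule sum_strict_mono)
    fix k :: 'n
    have "norm ((u - z) $ k) \<le> \<bar>Re ((u - z) $ k)\<bar> + \<bar>Im ((u - z) $ k)\<bar>" by (rule cmod_le)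
    then show "norm ((u - z) $ k) < 2 * \<eta>" using close[of k] by simp
  qed auto
  finally show False using assms by simp
qed

text \<open>A product over the coordinates of one-variable peak polynomials: every \<open>u \<in> E\<close> is
  far from \<open>z\<close> in some coordinate, where the corresponding factor is tiny.\<close>

lemma cpoly_peak_at_point:
  fixes E :: "(complex^'n) set"
  assumes E: "compact E" "E \<noteq> {}" and z: "z \<notin> E"
    and thin: "\<And>b. b \<in> Basis \<Longrightarrow> interior ((\<lambda>u. u \<bullet> b) ` E) = {}"
  shows "\<exists>P. cpoly P \<and> (\<forall>u\<in>E. norm (P u) < norm (P z))"
proof -
  define N where "N = CARD('n)"
  have N: "N > 0" by (simp add: N_def)
  define r where "r = infdist z E"
  have r: "r > 0"
    unfolding r_def using E z by (intro infdist_pos_not_in_closed) (auto intro: compact_imp_closed)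
  define \<eta> where "\<eta> = r / (2 * real N)"
  have \<eta>: "\<eta> > 0" using r N by (simp add: \<eta>_def)
  define \<delta> :: real where "\<delta> = (1/4) ^ N / 2"
  have \<delta>: "\<delta> > 0" by (simp add: \<delta>_def)
  have "interior ((\<lambda>u. Re (u$k)) ` E) = {}" "interior ((\<lambda>u. Im (u$k)) ` E) = {}" for k
    using thin[of "axis k 1"] thin[of "axis k \<i>"] by (auto simp: inner_axis Basis_vec_def)
  then have "\<forall>k. \<exists>q. norm (poly q (z$k)) \<ge> 1/2 \<and> (\<forall>u\<in>E. norm (poly q (u$k)) \<le> 2) \<and>
     (\<forall>u\<in>E. (\<bar>Re (u$k) - Re (z$k)\<bar> \<ge> \<eta> \<or> \<bar>Im (u$k) - Im (z$k)\<bar> \<ge> \<eta>) \<longrightarrow> norm (poly q (u$k)) \<le> \<delta>)"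
    using coordinate_peak_poly[OF E(1) \<eta> \<delta>] by blast
  then obtain Q where Q: "\<And>k. norm (poly (Q k) (z$k)) \<ge> 1/2"
    "\<And>k u. u \<in> E \<Longrightarrow> norm (poly (Q k) (u$k)) \<le> 2"
    "\<And>k u. u \<in> E \<Longrightarrow> (\<bar>Re (u$k) - Re (z$k)\<bar> \<ge> \<eta> \<or> \<bar>Im (u$k) - Im (z$k)\<bar> \<ge> \<eta>)
       \<Longrightarrow> norm (poly (Q k) (u$k)) \<le> \<delta>"
    by metis
  define P where "P = (\<lambda>u::complex^'n. \<Prod>k\<in>UNIV. poly (Q k) (u$k))"
  have "cpoly P" unfolding P_def by (intro cpoly_prod cpoly_poly_component) auto
  moreover have "norm (P u) < norm (P z)" if u: "u \<in> E" for u
  proof -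
    have "(1/2) ^ N = (\<Prod>k\<in>(UNIV::'n set). 1/2)" by (simp add: N_def)
    also have "\<dots> \<le> (\<Prod>k\<in>UNIV. norm (poly (Q k) (z$k)))" by (intro prod_mono) (use Q(1) in force)
    also have "\<dots> = norm (P z)" by (simp add: P_def prod_norm)
    finally have Pz: "(1/2) ^ N \<le> norm (P z)" .
    have "2 * real CARD('n) * \<eta> \<le> dist u z"
      using infdist_le[OF u, of z] N by (simp add: r_def \<eta>_def N_def dist_commute)
    then obtain k0 where k0: "\<eta> \<le> \<bar>Re (u$k0) - Re (z$k0)\<bar> \<or> \<eta> \<le> \<bar>Im (u$k0) - Im (z$k0)\<bar>"
      by (rule far_component_if_dist_ge)
    have "norm (P u) = (\<Prod>k\<in>UNIV. norm (poly (Q k) (u$k)))" by (simp add: P_def prod_norm)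
    also have "\<dots> = norm (poly (Q k0) (u$k0)) * (\<Prod>k\<in>UNIV - {k0}. norm (poly (Q k) (u$k)))"
      by (simp add: prod.remove)
    also have "\<dots> \<le> \<delta> * (\<Prod>k\<in>UNIV - {k0}. 2)"
      using Q(2)[OF u] Q(3)[OF u k0] \<delta> by (intro mult_mono prod_mono) (auto intro: prod_nonneg)
    also have "\<dots> \<le> \<delta> * 2 ^ N"
      using \<delta> by (simp add: N_def card_Diff_subset)
    also have "\<dots> = (1/2) ^ N / 2" by (simp add: \<delta>_def power_mult_distrib[symmetric])
    finally have "norm (P u) \<le> (1/2) ^ N / 2" .
    moreover have "(0::real) < (1/2) ^ N" by simp
    ultimately show ?thesis using Pz by linarith
  qed
  ultimately show ?thesis by blast
qed

lemma subset_poly_hull: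
  fixes E :: "(complex^'n) set"
  assumes "compact E" shows "E \<subseteq> poly_hull E"
proof
  fix z assume z: "z \<in> E"
  show "z \<in> poly_hull E" unfolding poly_hull_def
  proof (intro CollectI allI impI)
    fix p :: "complex^'n \<Rightarrow> complex" assume "cpoly p"
    then have "continuous_on E (\<lambda>x. norm (p x))"
      using cpoly_continuous continuous_on_subset continuous_on_norm by blast
    then have "bounded ((\<lambda>x. norm (p x)) ` E)"
      using compact_continuous_image[OF _ assms] compact_imp_bounded by blast
    then have "bdd_above ((\<lambda>x. norm (p x)) ` E)" by (rule bounded_imp_bdd_above)
    then show "norm (p z) \<le> (SUP x\<in>E. norm (p x))" using z by (rule cSUP_upper2) simp
  qed
qed

text \<open>Nonemptiness matters: \<open>Sup {}\<close> is unspecified on the reals, so \<open>poly_hull {}\<close> is unknown.\<close>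

lemma polynomially_convex_if_thin_projections:
  fixes E :: "(complex^'n) set"
  assumes E: "compact E" "E \<noteq> {}"
    and thin: "\<And>b. b \<in> Basis \<Longrightarrow> interior ((\<lambda>u. u \<bullet> b) ` E) = {}"
  shows "polynomially_convex E"
  unfolding polynomially_convex_def
proof (intro equalityI subsetI)
  fix z assume hull: "z \<in> poly_hull E"
  show "z \<in> E"
  proof (rule ccontr)
    assume "z \<notin> E"
    then obtain P where P: "cpoly P" "\<forall>u\<in>E. norm (P u) < norm (P z)"
      using cpoly_peak_at_point[OF E _ thin] by blast
    have "continuous_on E (\<lambda>x. norm (P x))"
      using cpoly_continuous[OF P(1)] continuous_on_subset continuous_on_norm by blast
    then obtain u0 where u0: "u0 \<in> E" "\<forall>u\<in>E. norm (P u) \<le> norm (P u0)"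
      using continuous_attains_sup[OF E] by blast
    have "norm (P z) \<le> (SUP x\<in>E. norm (P x))" using hull P(1) by (auto simp: poly_hull_def)
    also have "\<dots> \<le> norm (P u0)" using u0 E(2) by (intro cSUP_least) auto
    also have "\<dots> < norm (P z)" using P(2) u0(1) by blast
    finally show False by simp
  qed
qed (use subset_poly_hull[OF E(1)] in blast)

section \<open>Thin open sets of small measure\<close>

text \<open>\<open>gap_set \<eta> a\<close> is an open subset of \<open>\<real>\<close> of length at most \<open>2 \<eta>\<close> that meets every interval
  but misses \<open>a\<close>: a union of balls centred at the rational translates \<open>a + q\<^sub>n\<close>, \<open>q\<^sub>n \<noteq> 0\<close>, with
  radii summing to at most \<open>\<eta>\<close>, each too small to contain \<open>a\<close>.\<close>

definition rat_enum :: "nat \<Rightarrow> real" where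
  "rat_enum = from_nat_into \<rat>"

definition gap_radius :: "real \<Rightarrow> nat \<Rightarrow> real" where
  "gap_radius \<eta> n = (if rat_enum n = 0 then 0 else min (\<bar>rat_enum n\<bar> / 2) (\<eta> / 2 ^ Suc n))"

definition gap_set :: "real \<Rightarrow> real \<Rightarrow> real set" where
  "gap_set \<eta> a = (\<Union>n. ball (a + rat_enum n) (gap_radius \<eta> n))"

lemma open_gap_set: "open (gap_set \<eta> a)"
  unfolding gap_set_def by auto

lemma not_in_gap_set: "a \<notin> gap_set \<eta> a"
proof
  assume "a \<in> gap_set \<eta> a"
  then obtain n where "\<bar>rat_enum n\<bar> < gap_radius \<eta> n"
    unfolding gap_set_def by (auto simp: dist_real_def)
  moreover have "gap_radius \<eta> n \<le> \<bar>rat_enum n\<bar> / 2"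
    unfolding gap_radius_def by (cases "rat_enum n = 0") auto
  ultimately show False by simp
qed

lemma gap_radius_le: "\<eta> > 0 \<Longrightarrow> 0 \<le> gap_radius \<eta> n \<and> gap_radius \<eta> n \<le> \<eta> / 2 ^ Suc n"
  by (simp add: gap_radius_def)

lemma gap_set_meets_interval:
  assumes "\<eta> > 0" "lo < hi"
  obtains c where "lo < c" "c < hi" "c \<in> gap_set \<eta> a"
proof -
  obtain q1 where q1: "q1 \<in> \<rat>" "lo - a < q1" "q1 < hi - a"
    using Rats_dense_in_real[of "lo - a" "hi - a"] assms by auto
  obtain q2 where q2: "q2 \<in> \<rat>" "lo - a < q2" "q2 < q1"
    using Rats_dense_in_real[OF q1(2)] by blast
  obtain q where q: "q \<in> \<rat>" "lo - a < q" "q < hi - a" "q \<noteq> 0"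
    using q1 q2 by (cases "q1 = 0") auto
  obtain n where n: "rat_enum n = q"
    using from_nat_into_surj[OF countable_rat q(1)] unfolding rat_enum_def by blast
  have "gap_radius \<eta> n > 0" using assms(1) n q(4) by (simp add: gap_radius_def)
  then have "a + q \<in> ball (a + rat_enum n) (gap_radius \<eta> n)" using n by simp
  then have "a + q \<in> gap_set \<eta> a" unfolding gap_set_def by blast
  moreover have "lo < a + q" "a + q < hi" using q by auto
  ultimately show thesis by (rule that[rotated 2])
qed

lemma interior_eq_empty_if_disjoint_gap_set:
  assumes "\<eta> > 0" "S \<inter> gap_set \<eta> a = {}"
  shows "interior S = {}"
proof (rule ccontr)
  assume "interior S \<noteq> {}"
  then obtain x e where "e > 0" "ball x e \<subseteq> S"
    by (metis equals0I open_contains_ball_eq open_interior interior_subset subset_trans)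
  moreover obtain c where "x - e < c" "c < x + e" "c \<in> gap_set \<eta> a"
    using gap_set_meets_interval[OF assms(1), of "x - e" "x + e"] \<open>e > 0\<close> by auto
  ultimately have "c \<in> S \<inter> gap_set \<eta> a" by (auto simp: dist_real_def)
  with assms(2) show False by blast
qed

lemma emeasure_slab_le:
  fixes Y :: "'a::euclidean_space set"
  assumes R: "\<forall>u\<in>Y. norm u \<le> R" "R \<ge> 0" and b: "b \<in> Basis" and r: "r \<ge> 0"
  shows "emeasure lebesgue (Y \<inter> {u. u \<bullet> b \<in> ball c r}) \<le> ennreal (2 * r * (2*R)^(DIM('a) - 1))"
proof -
  define l :: 'a where "l = (\<Sum>b'\<in>Basis. (if b' = b then c - r else -R) *\<^sub>R b')"
  define h :: 'a where "h = (\<Sum>b'\<in>Basis. (if b' = b then c + r else R) *\<^sub>R b')"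
  have coord: "(\<Sum>b'\<in>Basis. f b' *\<^sub>R b') \<bullet> i = f i" if "i \<in> Basis" for f i
    using that by (simp add: inner_sum_left inner_Basis if_distrib[of "\<lambda>x. _ * x"] cong: if_cong)
  have l: "l \<bullet> b' = (if b' = b then c - r else -R)" and h: "h \<bullet> b' = (if b' = b then c + r else R)"
    if "b' \<in> Basis" for b'
    unfolding l_def h_def by (rule coord[OF that])+
  have "Y \<inter> {u. u \<bullet> b \<in> ball c r} \<subseteq> cbox l h"
  proof (safe, unfold mem_box, intro ballI conjI)
    fix u b' :: 'a assume u: "u \<in> Y" "u \<bullet> b \<in> ball c r" and b': "b' \<in> Basis"
    have "\<bar>u \<bullet> b'\<bar> \<le> R" using Basis_le_norm[OF b', of u] R u by force
    moreover have "\<bar>u \<bullet> b - c\<bar> < r" using u by (auto simp: dist_real_def abs_minus_commute)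
    ultimately show "l \<bullet> b' \<le> u \<bullet> b'" "u \<bullet> b' \<le> h \<bullet> b'" using l[OF b'] h[OF b'] by auto
  qed
  then have "emeasure lebesgue (Y \<inter> {u. u \<bullet> b \<in> ball c r}) \<le> emeasure lebesgue (cbox l h)"
    by (rule emeasure_mono) simp
  also have "\<dots> = emeasure lborel (cbox l h)" by simp
  also have "\<dots> = ennreal (\<Prod>b'\<in>Basis. (h - l) \<bullet> b')"
    using l h R r by (simp add: emeasure_lborel_cbox_eq)
  also have "(\<Prod>b'\<in>Basis. (h - l) \<bullet> b') = (\<Prod>b'\<in>Basis. (if b' = b then 2 * r else 2 * R))"
    using l h by (intro prod.cong) (auto simp: inner_diff_left)
  also have "\<dots> = 2 * r * (2 * R) ^ (DIM('a) - 1)"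
  proof -
    have "card (Basis \<inter> - {b}) = DIM('a) - 1"
      using b by (simp add: Diff_eq[symmetric] card_Diff_singleton)
    then show ?thesis using b by (simp add: prod.If_cases Int_absorb1)
  qed
  finally show ?thesis by simp
qed

lemma emeasure_gap_slab_le:
  fixes Y :: "'a::euclidean_space set"
  assumes R: "\<forall>u\<in>Y. norm u \<le> R" "R \<ge> 0" and b: "b \<in> Basis" and \<eta>: "\<eta> > 0"
    and Y: "Y \<in> sets lebesgue"
  shows "emeasure lebesgue (Y \<inter> {u. u \<bullet> b \<in> gap_set \<eta> a}) \<le> ennreal (2 * \<eta> * (2*R)^(DIM('a) - 1))"
proof -
  define C where "C = (2*R)^(DIM('a) - 1)"
  have C: "C \<ge> 0" using R by (simp add: C_def)
  define S where "S = (\<lambda>n. Y \<inter> {u. u \<bullet> b \<in> ball (a + rat_enum n) (gap_radius \<eta> n)})"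
  have "open {u::'a. u \<bullet> b \<in> ball (a + rat_enum n) (gap_radius \<eta> n)}" for n
    unfolding vimage_def[symmetric] by (intro continuous_open_vimage continuous_intros) auto
  then have S: "range S \<subseteq> sets lebesgue"
    using Y by (auto simp: S_def borel_open)
  have "Y \<inter> {u. u \<bullet> b \<in> gap_set \<eta> a} = (\<Union>n. S n)" by (auto simp: S_def gap_set_def)
  then have "emeasure lebesgue (Y \<inter> {u. u \<bullet> b \<in> gap_set \<eta> a}) \<le> (\<Sum>n. emeasure lebesgue (S n))"
    using emeasure_subadditive_countably[OF S] by simp
  also have "\<dots> \<le> (\<Sum>n. ennreal (2 * C * \<eta> * (1/2)^Suc n))"
  proof (intro suminf_le allI)
    fix n
    have "emeasure lebesgue (S n) \<le> ennreal (2 * gap_radius \<eta> n * C)"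
      unfolding S_def C_def using gap_radius_le[OF \<eta>] by (intro emeasure_slab_le[OF R b]) auto
    also have "\<dots> \<le> ennreal (2 * C * \<eta> * (1/2)^Suc n)"
      using gap_radius_le[OF \<eta>, of n] C
      by (intro ennreal_leI) (simp add: power_one_over field_simps mult_left_mono)
    finally show "emeasure lebesgue (S n) \<le> ennreal (2 * C * \<eta> * (1/2)^Suc n)" .
  qed auto
  also have "\<dots> = ennreal (2 * C * \<eta> * 1)"
    by (intro suminf_ennreal_eq sums_mult power_half_series) (use C \<eta> in auto)
  finally show ?thesis by (simp add: C_def mult_ac)
qed

lemma open_set_with_thin_complement:
  fixes Y :: "'a::euclidean_space set"
  assumes Y: "bounded Y" "Y \<in> sets lebesgue" and e: "e > 0"
  obtains B where "open B" "a \<notin> B" "emeasure lebesgue (Y \<inter> B) \<le> ennreal e"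
    "\<And>b. b \<in> Basis \<Longrightarrow> interior ((\<lambda>u. u \<bullet> b) ` (- B)) = {}"
proof -
  obtain R0 where "\<forall>u\<in>Y. norm u \<le> R0" using Y(1) bounded_iff by metis
  then have R: "\<forall>u\<in>Y. norm u \<le> max R0 0" "max R0 0 \<ge> 0" by force+
  define C where "C = (2 * max R0 0)^(DIM('a) - 1)"
  have C: "C \<ge> 0" by (simp add: C_def)
  define \<eta> where "\<eta> = e / (2 * (DIM('a) * C + 1))"
  have \<eta>: "\<eta> > 0" using e C by (simp add: \<eta>_def add_nonneg_pos)
  have "real DIM('a) * C + 1 > 0" using C by (simp add: add_nonneg_pos)
  then have "\<eta> * (2 * (DIM('a) * C + 1)) = e" by (simp add: \<eta>_def)
  then have \<eta>C: "DIM('a) * (2 * \<eta> * C) \<le> e"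
    using \<eta> by (simp add: algebra_simps)
  define slab where "slab = (\<lambda>b. {u::'a. u \<bullet> b \<in> gap_set \<eta> (a \<bullet> b)})"
  define B where "B = (\<Union>b\<in>Basis. slab b)"
  have open_slab: "open (slab b)" for b
    unfolding slab_def vimage_def[symmetric] by (intro continuous_open_vimage continuous_intros open_gap_set)
  then have "open B" by (auto simp: B_def)
  moreover have "a \<notin> B" by (simp add: B_def slab_def not_in_gap_set)
  moreover have "emeasure lebesgue (Y \<inter> B) \<le> ennreal e"
  proof -
    have "(\<lambda>b. Y \<inter> slab b) ` Basis \<subseteq> sets lebesgue" using open_slab Y(2) by (auto simp: borel_open)
    then have "emeasure lebesgue (Y \<inter> B) \<le> (\<Sum>b\<in>Basis. emeasure lebesgue (Y \<inter> slab b))"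
      unfolding B_def Int_UN_distrib by (intro emeasure_subadditive_finite) auto
    also have "\<dots> \<le> (\<Sum>b\<in>(Basis::'a set). ennreal (2 * \<eta> * C))"
      unfolding slab_def C_def by (intro sum_mono emeasure_gap_slab_le[OF R _ \<eta> Y(2)])
    also have "\<dots> = ennreal (\<Sum>b\<in>(Basis::'a set). 2 * \<eta> * C)"
      using \<eta> C by (intro sum_ennreal) auto
    also have "(\<Sum>b\<in>(Basis::'a set). 2 * \<eta> * C) = DIM('a) * (2 * \<eta> * C)" by simp
    also have "\<dots> \<le> ennreal e" using \<eta>C by (rule ennreal_leI)
    finally show ?thesis .
  qed
  moreover have "interior ((\<lambda>u. u \<bullet> b) ` (- B)) = {}" if "b \<in> Basis" for b
    using that by (intro interior_eq_empty_if_disjoint_gap_set[OF \<eta>, of _ "a \<bullet> b"])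
      (auto simp: B_def slab_def)
  ultimately show thesis using that by blast
qed

section \<open>Open neighbourhoods of zero sets\<close>

lemma cpoly_zero_set_small_open_nbhd:
  fixes p :: "complex^'n \<Rightarrow> complex"
  assumes p: "cpoly p" "p x0 \<noteq> 0" and e: "e > 0"
  obtains W where "open W" "{z. p z = 0} \<subseteq> W" "x0 \<notin> W" "emeasure lebesgue W \<le> ennreal e"
proof -
  let ?Z = "{z. p z = 0}"
  have Z: "?Z \<in> null_sets lebesgue"
    using cpoly_zero_set_null[OF p] by (rule null_sets_completionI)
  then have Z_sets: "?Z \<in> sets lebesgue" by auto
  obtain T where T: "open T" "?Z \<subseteq> T" "T - ?Z \<in> lmeasurable" "emeasure lebesgue (T - ?Z) < ennreal e"
    using sets_lebesgue_outer_open[OF Z_sets e] by blast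
  have "emeasure lebesgue T \<le> emeasure lebesgue ((T - ?Z) \<union> ?Z)"
    by (rule emeasure_mono) (use T Z_sets in \<open>auto simp: fmeasurable_def\<close>)
  also have "\<dots> \<le> emeasure lebesgue (T - ?Z) + emeasure lebesgue ?Z"
    by (rule emeasure_subadditive) (use T Z_sets in \<open>auto simp: fmeasurable_def\<close>)
  also have "\<dots> \<le> ennreal e" using T(4) Z by auto
  finally have "emeasure lebesgue (T - {x0}) \<le> ennreal e"
    by (rule order_trans[rotated]) (use T(1) in \<open>auto intro: emeasure_mono\<close>)
  moreover have "open (T - {x0})" "?Z \<subseteq> T - {x0}" using T p(2) by auto
  ultimately show thesis using that by blast
qed

lemma countable_zero_sets_small_open_nbhd:
  fixes P :: "(complex^'n \<Rightarrow> complex) set"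
  assumes P: "countable P" "\<forall>p\<in>P. cpoly p \<and> p x0 \<noteq> 0" and e: "e > 0"
  obtains W where "open W" "\<forall>p\<in>P. {z. p z = 0} \<subseteq> W" "x0 \<notin> W" "emeasure lebesgue W \<le> ennreal e"
proof (cases "P = {}")
  case True
  then show thesis using that[of "{}"] by auto
next
  case False
  have "\<exists>W. open W \<and> {z. from_nat_into P n z = 0} \<subseteq> W \<and> x0 \<notin> W \<and>
      emeasure lebesgue W \<le> ennreal (e * (1/2) ^ Suc n)" for n
  proof -
    have "from_nat_into P n \<in> P" using False by (rule from_nat_into)
    moreover have "e * (1/2) ^ Suc n > 0" using e by simp
    ultimately obtain W where "open W" "{z. from_nat_into P n z = 0} \<subseteq> W" "x0 \<notin> W"
      "emeasure lebesgue W \<le> ennreal (e * (1/2) ^ Suc n)"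
      using cpoly_zero_set_small_open_nbhd P(2) by blast
    then show ?thesis by blast
  qed
  then obtain W where W: "\<And>n. open (W n)" "\<And>n. {z. from_nat_into P n z = 0} \<subseteq> W n"
    "\<And>n. x0 \<notin> W n" "\<And>n. emeasure lebesgue (W n) \<le> ennreal (e * (1/2) ^ Suc n)"
    by metis
  have "{z. p z = 0} \<subseteq> (\<Union>n. W n)" if p: "p \<in> P" for p
  proof -
    obtain n where "from_nat_into P n = p" using from_nat_into_surj[OF P(1) p] by blast
    then show ?thesis using W(2)[of n] by blast
  qed
  moreover have "emeasure lebesgue (\<Union>n. W n) \<le> ennreal e"
  proof -
    have "emeasure lebesgue (\<Union>n. W n) \<le> (\<Sum>n. emeasure lebesgue (W n))"
      using W(1) by (intro emeasure_subadditive_countably) (auto simp: borel_open)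
    also have "\<dots> \<le> (\<Sum>n. ennreal (e * (1/2) ^ Suc n))"
      using W(4) by (intro suminf_le) auto
    also have "\<dots> = ennreal (e * 1)"
      by (intro suminf_ennreal_eq sums_mult power_half_series) (use e in auto)
    finally show ?thesis by simp
  qed
  moreover have "open (\<Union>n. W n)" "x0 \<notin> (\<Union>n. W n)" using W(1,3) by auto
  ultimately show thesis using that[of "\<Union>n. W n"] by blast
qed

theorem lemma2p5:
  fixes Y :: "(complex ^ 'n) set" and x0 :: "complex ^ 'n" and \<epsilon> :: real
    and P :: "(complex ^ 'n \<Rightarrow> complex) set"
  assumes "compact Y" and "x0 \<in> Y" and "\<epsilon> > 0"
    and "countable P" and "\<forall>p\<in>P. cpoly p" and "\<forall>p\<in>P. p x0 \<noteq> 0"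
  shows "\<exists>E. totally_disconnected E \<and> compact E \<and> polynomially_convex E
           \<and> x0 \<in> E \<and> E \<subseteq> Y
           \<and> (\<forall>p\<in>P. \<forall>z\<in>E. p z \<noteq> 0)
           \<and> emeasure lebesgue (Y - E) < ennreal \<epsilon>"
proof -
  note Y = \<open>compact Y\<close> and \<epsilon> = \<open>\<epsilon> > 0\<close>
  have Y_sets: "Y \<in> sets lebesgue" using Y by (simp add: compact_imp_closed borel_closed)
  obtain B where B: "open B" "x0 \<notin> B" "emeasure lebesgue (Y \<inter> B) \<le> ennreal (\<epsilon> / 4)"
    "\<And>b. b \<in> Basis \<Longrightarrow> interior ((\<lambda>u. u \<bullet> b) ` (- B)) = {}"
    using open_set_with_thin_complement[OF compact_imp_bounded[OF Y] Y_sets, of "\<epsilon> / 4"] \<epsilon> by auto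
  obtain W where W: "open W" "\<forall>p\<in>P. {z. p z = 0} \<subseteq> W" "x0 \<notin> W" "emeasure lebesgue W \<le> ennreal (\<epsilon> / 4)"
    using countable_zero_sets_small_open_nbhd[of P x0 "\<epsilon> / 4"] assms(4-6) \<epsilon> by auto
  define E where "E = Y - B - W"
  have E: "compact E" "x0 \<in> E"
    using Y B(1,2) W(1,3) assms(2) by (auto simp: E_def Diff_eq intro: compact_Int_closed)
  have thin: "interior ((\<lambda>u. u \<bullet> b) ` E) = {}" if "b \<in> Basis" for b
    using interior_mono[OF image_mono[of E "- B"]] B(4)[OF that] by (auto simp: E_def)
  have B_sets: "Y \<inter> B \<in> sets lebesgue" and W_sets: "W \<in> sets lebesgue"
    using Y_sets B(1) W(1) by (auto simp: borel_open)
  have "emeasure lebesgue (Y - E) \<le> emeasure lebesgue ((Y \<inter> B) \<union> W)"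
    using B_sets W_sets by (intro emeasure_mono) (auto simp: E_def)
  also have "\<dots> \<le> emeasure lebesgue (Y \<inter> B) + emeasure lebesgue W"
    using B_sets W_sets by (rule emeasure_subadditive)
  also have "\<dots> \<le> ennreal (\<epsilon> / 4) + ennreal (\<epsilon> / 4)" using B(3) W(4) by (rule add_mono)
  also have "\<dots> = ennreal (\<epsilon> / 2)" using \<epsilon> by (simp flip: ennreal_plus)
  also have "\<dots> < ennreal \<epsilon>" using \<epsilon> by (simp add: ennreal_lessI)
  finally have "emeasure lebesgue (Y - E) < ennreal \<epsilon>" .
  moreover have "\<forall>p\<in>P. \<forall>z\<in>E. p z \<noteq> 0" using W(2) by (auto simp: E_def)
  moreover have "totally_disconnected E" using thin by (rule totally_disconnected_if_thin_projections)
  moreover have "polynomially_convex E"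
    using E thin by (intro polynomially_convex_if_thin_projections) auto
  moreover have "E \<subseteq> Y" by (auto simp: E_def)
  ultimately show ?thesis using E by blast
qed

end
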